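(* There is an absolute constant $c$ such that for every BST $T$ and every set $F$ of $k$ nodes of $T$ containing the root of $T$, the extended hand $E(T,F)$ consists of at most $c\,k$ intervals.
   Context: Let $T$ be a BST and $F$ a set of $k$ nodes (fingers) including the root. $S(T,F)$ is the Steiner tree of $F$ in $T$ (the minimal connected subtree containing $F$). The set of pseudofingers $P(T,F)$ consists of $F$ together with all nodes of degree $3$ in $S(T,F)$. For pseudofingers $x,y$ with $x$ an ancestor of $y$ such that the path between them contains no other pseudofinger, the tendon $\tau_{x,y}$ is the set of nodes strictly between $x$ and $y$ on this path. Its half tendons are $\tau^{<}_{x,y}=\{z\in\tau_{x,y}: z<y\}$ and $\tau^{>}_{x,y}=\{z\in\tau_{x,y}:z>y\}$; $H(T,F)$ is the set of all (nonempty) half tendons. A half tendon $\tau$ is identified with the interval $[\min\tau,\max\tau]$ and a pseudofinger $f$ with $[f,f]$. The extended hand is $E(T,F)=P(T,F)\cup H(T,F)$, viewed as a set of intervals. *)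

theory Defs
  imports Main "HOL-Library.Tree"
begin

text \<open>A BST is a tree T :: nat tree with bst T (strictly increasing inorder, so keys are
distinct); nodes are identified with their keys.\<close>

definition nodes :: "nat tree \<Rightarrow> nat set" where
  "nodes T = set_tree T"

definition anc :: "nat tree \<Rightarrow> nat \<Rightarrow> nat \<Rightarrow> bool" where
  "anc T a d \<longleftrightarrow> (\<exists>l r. Node l a r \<in> subtrees T \<and> d \<in> set_tree (Node l a r))"

definition proper_anc :: "nat tree \<Rightarrow> nat \<Rightarrow> nat \<Rightarrow> bool" where
  "proper_anc T a d \<longleftrightarrow> anc T a d \<and> a \<noteq> d"

definition parent :: "nat tree \<Rightarrow> nat \<Rightarrow> nat \<Rightarrow> bool" where
  "parent T p c \<longleftrightarrow> (\<exists>l r. Node l p r \<in> subtrees T \<and>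
      ((\<exists>ll rr. l = Node ll c rr) \<or> (\<exists>ll rr. r = Node ll c rr)))"

definition is_root :: "nat tree \<Rightarrow> nat \<Rightarrow> bool" where
  "is_root T x \<longleftrightarrow> (\<exists>l r. T = Node l x r)"

text \<open>w lies on the (unique) tree path between u and v: w is an ancestor-or-self of u or of v,
and every common ancestor of u and v is an ancestor-or-self of w (i.e. w is below the LCA).\<close>
definition on_path :: "nat tree \<Rightarrow> nat \<Rightarrow> nat \<Rightarrow> nat \<Rightarrow> bool" where
  "on_path T u v w \<longleftrightarrow> (anc T w u \<or> anc T w v) \<and>
      (\<forall>a. anc T a u \<and> anc T a v \<longrightarrow> anc T a w)"

text \<open>Steiner tree S(T,F): union of all tree paths between nodes of F (the minimal connected
subtree containing F).\<close>
definition steiner :: "nat tree \<Rightarrow> nat set \<Rightarrow> nat set" where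
  "steiner T F = {w. \<exists>u\<in>F. \<exists>v\<in>F. on_path T u v w}"

definition deg_in :: "nat tree \<Rightarrow> nat set \<Rightarrow> nat \<Rightarrow> nat" where
  "deg_in T S w = card {z \<in> S. parent T w z \<or> parent T z w}"

definition pseudofingers :: "nat tree \<Rightarrow> nat set \<Rightarrow> nat set" where
  "pseudofingers T F = F \<union> {w \<in> steiner T F. deg_in T (steiner T F) w = 3}"

definition between :: "nat tree \<Rightarrow> nat \<Rightarrow> nat \<Rightarrow> nat set" where
  "between T x y = {z. proper_anc T x z \<and> proper_anc T z y}"

definition tendon_pair :: "nat tree \<Rightarrow> nat set \<Rightarrow> nat \<Rightarrow> nat \<Rightarrow> bool" where
  "tendon_pair T F x y \<longleftrightarrow> x \<in> pseudofingers T F \<and> y \<in> pseudofingers T F \<and>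
      proper_anc T x y \<and> between T x y \<inter> pseudofingers T F = {}"

definition half_tendons :: "nat tree \<Rightarrow> nat set \<Rightarrow> nat set set" where
  "half_tendons T F =
     {h. h \<noteq> {} \<and> (\<exists>x y. tendon_pair T F x y \<and>
          (h = {z \<in> between T x y. z < y} \<or> h = {z \<in> between T x y. z > y}))}"

text \<open>Extended hand as a set of intervals [a,b], represented by pairs (a,b).\<close>
definition extended_hand :: "nat tree \<Rightarrow> nat set \<Rightarrow> (nat \<times> nat) set" where
  "extended_hand T F = (\<lambda>f. (f, f)) ` pseudofingers T F \<union>
                        (\<lambda>h. (Min h, Max h)) ` half_tendons T F"

end

theory Submission
  imports Defs
begin

text \<open>A pseudofinger that is not a finger has degree 3 in the Steiner tree, so both of its
subtrees contain fingers. By induction on the tree, fewer nodes have fingers in both subtrees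
than there are fingers, hence there are at most 2k pseudofingers. Since the ancestors of a node
form a chain, a tendon is determined by its lower pseudofinger, so there are at most two half
tendons per pseudofinger and at most 6k intervals in total.\<close>

lemma subtrees_self: "t \<in> subtrees t"
  by (cases t) auto

lemma subtrees_trans: "s \<in> subtrees t \<Longrightarrow> t \<in> subtrees u \<Longrightarrow> s \<in> subtrees u"
  by (induction u) auto

lemma set_tree_subset_if_subtree: "s \<in> subtrees t \<Longrightarrow> set_tree s \<subseteq> set_tree t"
  by (induction t) auto

lemma subtree_at_key_unique:
  "distinct (inorder t) \<Longrightarrow> Node l a r \<in> subtrees t \<Longrightarrow> Node l' a r' \<in> subtrees t
   \<Longrightarrow> l = l' \<and> r = r'"
proof (induction t)
  case (Node L v R)
  then show ?case
    by (cases "a = v") (auto dest: in_set_tree_if)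
qed simp

lemma subtrees_nested:
  "distinct (inorder t) \<Longrightarrow> s \<in> subtrees t \<Longrightarrow> s' \<in> subtrees t
   \<Longrightarrow> set_tree s \<inter> set_tree s' \<noteq> {} \<Longrightarrow> s \<in> subtrees s' \<or> s' \<in> subtrees s"
proof (induction t)
  case (Node L v R)
  have "set_tree L \<inter> set_tree R = {}" "v \<notin> set_tree L" "v \<notin> set_tree R"
    using Node.prems(1) by auto
  with Node show ?case
    using set_tree_subset_if_subtree[of s] set_tree_subset_if_subtree[of s'] by auto
qed simp

lemma anc_iff_in_subtree:
  assumes "distinct (inorder T)" and "Node l a r \<in> subtrees T"
  shows "anc T a d \<longleftrightarrow> d \<in> set_tree (Node l a r)"
  using subtree_at_key_unique[OF assms(1) assms(2)] assms(2) unfolding anc_def by blast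

lemma anc_linear:
  assumes "distinct (inorder T)" and "anc T a d" and "anc T b d"
  shows "anc T a b \<or> anc T b a"
proof -
  obtain la ra lb rb where a: "Node la a ra \<in> subtrees T" "d \<in> set_tree (Node la a ra)"
    and b: "Node lb b rb \<in> subtrees T" "d \<in> set_tree (Node lb b rb)"
    using assms(2,3) unfolding anc_def by blast
  then have "Node la a ra \<in> subtrees (Node lb b rb) \<or> Node lb b rb \<in> subtrees (Node la a ra)"
    using subtrees_nested[OF assms(1)] by blast
  then show ?thesis
    unfolding anc_def using a(1) b(1) by (metis in_set_tree_if subtrees_trans)
qed

lemma distinct_inorder_subtree:
  "distinct (inorder t) \<Longrightarrow> s \<in> subtrees t \<Longrightarrow> distinct (inorder s)"
  by (induction t) auto

lemma child_has_unique_parent_node: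
  assumes T: "distinct (inorder (Node l z r))" and "c \<noteq> Leaf"
    and "c \<in> {l, r}" and "Node l' z' r' \<in> subtrees (Node l z r)" and "c \<in> {l', r'}"
  shows "z' = z"
proof (rule ccontr)
  assume "z' \<noteq> z"
  then obtain s where s: "s \<in> {l, r}" and below: "Node l' z' r' \<in> subtrees s"
    using assms(4) by auto
  have "c \<in> subtrees s"
    using subtrees_trans[OF _ below] assms(5) subtrees_self by auto
  show False
  proof (cases "s = c")
    case True
    have "size (Node l' z' r') \<le> size c"
      using size_subtrees[OF below] True by simp
    then show False
      using assms(5) by auto
  next
    case False
    have "set_tree l \<inter> set_tree r = {}"
      using T by auto
    then have "set_tree c = {}"
      using set_tree_subset_if_subtree[OF \<open>c \<in> subtrees s\<close>] s assms(3) False by blast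
    then show False
      using assms(2) by simp
  qed
qed

lemma parent_unique:
  assumes T: "distinct (inorder T)" and "parent T z w" and "parent T z' w"
  shows "z = z'"
proof -
  obtain l r a b where N: "Node l z r \<in> subtrees T" and C: "Node a w b \<in> {l, r}"
    using assms(2) unfolding parent_def by blast
  obtain l' r' a' b' where N': "Node l' z' r' \<in> subtrees T" and C': "Node a' w b' \<in> {l', r'}"
    using assms(3) unfolding parent_def by blast
  have "Node a w b \<in> subtrees (Node l z r)" "Node a' w b' \<in> subtrees (Node l' z' r')"
    using C C' subtrees_self by auto
  then have "a = a' \<and> b = b'"
    using subtree_at_key_unique[OF T] subtrees_trans N N' by blast
  with C' have C': "Node a w b \<in> {l', r'}"
    by simp
  have "w \<in> set_tree (Node l z r) \<inter> set_tree (Node l' z' r')"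
    using C C' by auto
  then have "Node l z r \<in> subtrees (Node l' z' r') \<or> Node l' z' r' \<in> subtrees (Node l z r)"
    using subtrees_nested[OF T N N'] by blast
  then show ?thesis
    using child_has_unique_parent_node[OF distinct_inorder_subtree[OF T N] _ C _ C']
      child_has_unique_parent_node[OF distinct_inorder_subtree[OF T N'] _ C' _ C]
    by blast
qed

definition branching_nodes :: "'a tree \<Rightarrow> 'a set \<Rightarrow> 'a set" where
  "branching_nodes t F =
     {w. \<exists>l r. Node l w r \<in> subtrees t \<and> set_tree l \<inter> F \<noteq> {} \<and> set_tree r \<inter> F \<noteq> {}}"

lemma branching_nodes_Leaf [simp]: "branching_nodes Leaf F = {}"
  by (simp add: branching_nodes_def)

lemma branching_nodes_Node [simp]:
  "branching_nodes (Node l v r) F = branching_nodes l F \<union> branching_nodes r F \<union>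
     (if set_tree l \<inter> F \<noteq> {} \<and> set_tree r \<inter> F \<noteq> {} then {v} else {})"
  unfolding branching_nodes_def using set_tree_subset_if_subtree by (auto; blast)

lemma branching_nodes_subset: "branching_nodes t F \<subseteq> set_tree t"
  by (induction t) auto

lemma branching_nodes_disjoint: "set_tree t \<inter> F = {} \<Longrightarrow> branching_nodes t F = {}"
  by (induction t) auto

lemma card_branching_nodes_less:
  "distinct (inorder t) \<Longrightarrow> set_tree t \<inter> F \<noteq> {} \<Longrightarrow>
   card (branching_nodes t F) < card (set_tree t \<inter> F)"
proof (induction t)
  case (Node l v r)
  have "card (set_tree l \<inter> F) + card (set_tree r \<inter> F) = card (set_tree l \<inter> F \<union> set_tree r \<inter> F)"
    using Node.prems(1) by (intro card_Un_disjoint[symmetric]) auto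
  also have "\<dots> \<le> card (set_tree (Node l v r) \<inter> F)"
    by (intro card_mono) auto
  finally have fingers:
    "card (set_tree l \<inter> F) + card (set_tree r \<inter> F) \<le> card (set_tree (Node l v r) \<inter> F)" .
  have "finite (branching_nodes t F)" for t
    using finite_subset[OF branching_nodes_subset] by simp
  then have branching: "card (branching_nodes (Node l v r) F)
      \<le> card (branching_nodes l F) + card (branching_nodes r F) + 1"
    using card_Un_le[of "branching_nodes l F" "branching_nodes r F"] by (simp add: card_insert_if)
  show ?case
    using Node fingers branching by (cases "set_tree l \<inter> F = {}"; cases "set_tree r \<inter> F = {}")
      (auto simp: branching_nodes_disjoint)
qed simp

lemma steiner_subset_set_tree: "steiner T F \<subseteq> set_tree T"
  unfolding steiner_def on_path_def anc_def by (auto dest: in_set_tree_if)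

lemma finger_below_steiner_node: "w \<in> steiner T F \<Longrightarrow> \<exists>u\<in>F. anc T w u"
  unfolding steiner_def on_path_def by blast

lemma child_is_root_of_subtree:
  assumes T: "distinct (inorder T)" and "Node l w r \<in> subtrees T" and "parent T w z"
  shows "(\<exists>a b. l = Node a z b) \<or> (\<exists>a b. r = Node a z b)"
  using assms(3) subtree_at_key_unique[OF T assms(2)] unfolding parent_def by blast

lemma deg_in_steiner_le_2:
  assumes T: "distinct (inorder T)" and N: "Node l w r \<in> subtrees T"
    and "set_tree l \<inter> F = {} \<or> set_tree r \<inter> F = {}"
  shows "deg_in T (steiner T F) w \<le> 2"
proof -
  obtain s t where st: "{s, t} = {l, r}" and s: "set_tree s \<inter> F = {}"
    using assms(3) by blast
  have children: "\<exists>a b. t = Node a z b" if "z \<in> steiner T F" and "parent T w z" for z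
  proof -
    obtain c a b where c: "c \<in> {l, r}" and "c = Node a z b"
      using child_is_root_of_subtree[OF T N \<open>parent T w z\<close>] by blast
    obtain u where "u \<in> F" and "anc T z u"
      using finger_below_steiner_node \<open>z \<in> steiner T F\<close> by blast
    moreover have "Node a z b \<in> subtrees T"
      using subtrees_trans[OF _ N] c \<open>c = Node a z b\<close> subtrees_self by auto
    ultimately have "u \<in> set_tree c"
      using anc_iff_in_subtree[OF T] \<open>c = Node a z b\<close> by blast
    then have "c \<noteq> s"
      using s \<open>u \<in> F\<close> by blast
    then show ?thesis
      using c st \<open>c = Node a z b\<close> by blast
  qed
  obtain p where "{z. parent T z w} \<subseteq> {p}"
    using parent_unique[OF T] by blast
  moreover obtain q where "{z. \<exists>a b. t = Node a z b} \<subseteq> {q}"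
    by (cases t) auto
  ultimately have "{z \<in> steiner T F. parent T w z \<or> parent T z w} \<subseteq> {p, q}"
    using children by blast
  then have "deg_in T (steiner T F) w \<le> card {p, q}"
    unfolding deg_in_def by (intro card_mono) auto
  also have "\<dots> \<le> 2"
    by (simp add: card_insert_if)
  finally show ?thesis .
qed

lemma deg_in_steiner_3_imp_branching:
  assumes T: "distinct (inorder T)" and "w \<in> steiner T F" and "deg_in T (steiner T F) w = 3"
  shows "w \<in> branching_nodes T F"
proof -
  obtain u where "anc T w u"
    using finger_below_steiner_node assms(2) by blast
  then obtain l r where N: "Node l w r \<in> subtrees T"
    unfolding anc_def by blast
  moreover have "set_tree l \<inter> F \<noteq> {}" and "set_tree r \<inter> F \<noteq> {}"
    using deg_in_steiner_le_2[OF T N, of F] assms(3) by auto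
  ultimately show ?thesis
    unfolding branching_nodes_def by blast
qed

lemma finite_pseudofingers: "finite F \<Longrightarrow> finite (pseudofingers T F)"
  unfolding pseudofingers_def using finite_subset[OF steiner_subset_set_tree] by auto

lemma card_pseudofingers_le:
  assumes T: "distinct (inorder T)" and F: "F \<subseteq> set_tree T"
  shows "card (pseudofingers T F) \<le> 2 * card F"
proof -
  have fin: "finite (F \<union> branching_nodes T F)"
    using finite_subset[OF F] finite_subset[OF branching_nodes_subset] by simp
  have branching: "card (branching_nodes T F) \<le> card F"
  proof (cases "F = {}")
    case False
    then have "card (branching_nodes T F) < card (set_tree T \<inter> F)"
      using card_branching_nodes_less[OF T] F by blast
    then show ?thesis
      using F by (simp add: Int_absorb1)
  qed (simp add: branching_nodes_disjoint)
  have "pseudofingers T F \<subseteq> F \<union> branching_nodes T F"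
    unfolding pseudofingers_def using deg_in_steiner_3_imp_branching[OF T] by blast
  then have "card (pseudofingers T F) \<le> card (F \<union> branching_nodes T F)"
    using card_mono[OF fin] by blast
  also have "\<dots> \<le> card F + card (branching_nodes T F)"
    by (rule card_Un_le)
  finally show ?thesis
    using branching by linarith
qed

lemma tendon_pair_top_unique:
  assumes T: "distinct (inorder T)" and "tendon_pair T F x y" and "tendon_pair T F x' y"
  shows "x = x'"
proof (rule ccontr)
  assume "x \<noteq> x'"
  moreover have "anc T x y" "anc T x' y"
    using assms(2,3) unfolding tendon_pair_def proper_anc_def by auto
  ultimately have "x' \<in> between T x y \<or> x \<in> between T x' y"
    using anc_linear[OF T] assms(2,3) unfolding between_def proper_anc_def tendon_pair_def by blast
  then show False
    using assms(2,3) unfolding tendon_pair_def by blast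
qed

lemma card_half_tendons_le:
  assumes T: "distinct (inorder T)" and P: "finite (pseudofingers T F)"
  shows "finite (half_tendons T F)" and "card (half_tendons T F) \<le> 2 * card (pseudofingers T F)"
proof -
  define top where "top y = (THE x. tendon_pair T F x y)" for y
  define lower where "lower y = {z \<in> between T (top y) y. z < y}" for y
  define upper where "upper y = {z \<in> between T (top y) y. z > y}" for y
  define tendons where "tendons = lower ` pseudofingers T F \<union> upper ` pseudofingers T F"
  have sub: "half_tendons T F \<subseteq> tendons"
  proof
    fix h
    assume "h \<in> half_tendons T F"
    then obtain x y where xy: "tendon_pair T F x y"
      and h: "h = {z \<in> between T x y. z < y} \<or> h = {z \<in> between T x y. z > y}"
      unfolding half_tendons_def by blast
    have "top y = x"
      unfolding top_def by (rule the_equality[where P = "\<lambda>x. tendon_pair T F x y", OF xy])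
        (rule tendon_pair_top_unique[OF T _ xy])
    moreover have "y \<in> pseudofingers T F"
      using xy unfolding tendon_pair_def by blast
    ultimately show "h \<in> tendons"
      using h unfolding tendons_def lower_def upper_def by blast
  qed
  have fin: "finite tendons"
    using P unfolding tendons_def by simp
  then show "finite (half_tendons T F)"
    using finite_subset[OF sub] by blast
  have "card (half_tendons T F) \<le> card tendons"
    using card_mono[OF fin sub] .
  also have "\<dots> \<le> card (lower ` pseudofingers T F) + card (upper ` pseudofingers T F)"
    unfolding tendons_def by (rule card_Un_le)
  also have "\<dots> \<le> 2 * card (pseudofingers T F)"
    using card_image_le[OF P, of lower] card_image_le[OF P, of upper] by linarith
  finally show "card (half_tendons T F) \<le> 2 * card (pseudofingers T F)" .
qed

lemma distinct_inorder_if_bst: "bst t \<Longrightarrow> distinct (inorder t)"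
  by (simp add: bst_iff_sorted_wrt_less strict_sorted_iff)

theorem lemma14:
  "\<exists>c::nat. \<forall>(T::nat tree) F k x.
     bst T \<and> F \<subseteq> nodes T \<and> card F = k \<and> is_root T x \<and> x \<in> F \<longrightarrow>
     card (extended_hand T F) \<le> c * k"
proof (intro exI[of _ 6] allI impI)
  fix T F k x
  assume "bst T \<and> F \<subseteq> nodes T \<and> card F = k \<and> is_root T x \<and> x \<in> F"
  \<comment> \<open>The bound holds whether or not the root is a finger.\<close>
  then have T: "distinct (inorder T)" and F: "F \<subseteq> set_tree T" and k: "card F = k"
    by (auto simp: nodes_def distinct_inorder_if_bst)
  have P: "finite (pseudofingers T F)"
    using finite_pseudofingers finite_subset[OF F] by simp
  note H = card_half_tendons_le[OF T P]
  have "card (extended_hand T F)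
      \<le> card ((\<lambda>f. (f, f)) ` pseudofingers T F) + card ((\<lambda>h. (Min h, Max h)) ` half_tendons T F)"
    unfolding extended_hand_def by (rule card_Un_le)
  also have "\<dots> \<le> card (pseudofingers T F) + card (half_tendons T F)"
    using card_image_le[OF P] card_image_le[OF H(1)] by (intro add_mono)
  also have "\<dots> \<le> 3 * card (pseudofingers T F)"
    using H(2) by linarith
  also have "\<dots> \<le> 6 * k"
    using card_pseudofingers_le[OF T F] k by linarith
  finally show "card (extended_hand T F) \<le> 6 * k" .
qed

end
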